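(* (1) Invariance: if $t\to_w u$ then $t\equiv^{typ} u$. (2) Compatibility: if $t\equiv^{typ}u$ then $C\langle t\rangle\equiv^{typ} C\langle u\rangle$ for every context $C$.
   Context: Terms: $t ::= x \mid \lambda x.t \mid t\,u \mid t[x\backslash u]$ ($t[x\backslash u]$ an explicit substitution binding $x$ in $t$; terms up to $\alpha$). Values $v ::= \lambda x.t$. Substitution contexts $S ::= \langle\cdot\rangle\mid S[x\backslash u]$. Weak contexts $W ::= \langle\cdot\rangle \mid W\,t \mid t\,W \mid t[x\backslash W] \mid W[x\backslash u]$; $W\langle\langle t\rangle\rangle$ is plugging without capture of free variables of $t$. Root rules: $S\langle\lambda x.t\rangle u\mapsto_m S\langle t[x\backslash u]\rangle$; $W\langle\langle x\rangle\rangle[x\backslash u]\mapsto_e W\langle\langle u\rangle\rangle[x\backslash u]$; $t[x\backslash S\langle v\rangle]\mapsto_{gcv} S\langle t\rangle$ if $x\notin\mathrm{fv}(t)$. $\to_w$ is the union of their closures under weak contexts. A context $C$ is a term with exactly one hole, anywhere (also under abstraction or inside ESs). Silly multi types: linear types $L ::= \mathtt{n} \mid M\multimap L$; multi types $M ::= [L_i]_{i\in I}$ finite multisets ($\mathbf{0}$ empty, $\uplus$ sum). Type contexts $\Gamma$ map variables to multi types with finite support; $\uplus$ pointwise; $\Gamma\setminus\!\!\setminus x$ sets $x$ to $\mathbf{0}$. Rules: (ax) $x:[L]\vdash^{(0,1)} x:L$; (many) from $(\Gamma_i\vdash^{(m_i,e_i)} t : L_i)_{i\in I}$, $I$ finite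 possibly empty, infer $\uplus_i\Gamma_i\vdash^{(\sum m_i,\sum e_i)} t : [L_i]_{i\in I}$; ($\mathrm{ax}_\lambda$) $\vdash^{(0,0)}\lambda x.t:\mathtt{n}$; ($\lambda$) from $\Gamma\vdash^{(m,e)}t:L$ infer $\Gamma\setminus\!\!\setminus x\vdash^{(m,e)}\lambda x.t:\Gamma(x)\multimap L$; (@) from $\Gamma\vdash^{(m,e)} t : M\multimap L$ and $\Delta\vdash^{(m',e')} u : M\uplus[\mathtt{n}]$ infer $\Gamma\uplus\Delta\vdash^{(m+m'+1,e+e')} tu : L$; (ES) from $\Gamma\vdash^{(m,e)} t:L$ and $\Delta\vdash^{(m',e')}u:\Gamma(x)\uplus[\mathtt{n}]$ infer $(\Gamma\setminus\!\!\setminus x)\uplus\Delta\vdash^{(m+m',e+e')} t[x\backslash u]:L$. Type equivalence: $t\equiv^{typ}u$ iff for all $\Gamma$ and linear types $L$, $\Gamma\vdash t:L$ is derivable iff $\Gamma\vdash u:L$ is derivable (indices ignored). *)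

theory Defs
  imports Main "HOL-Library.Multiset"
begin

text \<open>Terms are taken up to alpha-equivalence by using de Bruijn indices.
  Lam t binds index 0 in t; ES t u is the explicit substitution t[x:=u],
  binding index 0 in t (u is outside the binder).\<close>

datatype trm = Var nat | Lam trm | App trm trm | ES trm trm

fun lift :: "nat \<Rightarrow> nat \<Rightarrow> trm \<Rightarrow> trm" where
  "lift k c (Var i) = Var (if i < c then i else i + k)"
| "lift k c (Lam t) = Lam (lift k (Suc c) t)"
| "lift k c (App t u) = App (lift k c t) (lift k c u)"
| "lift k c (ES t u) = ES (lift k (Suc c) t) (lift k c u)"

text \<open>Remove the (unused) index c: decrement indices > c.\<close>
fun lower :: "nat \<Rightarrow> trm \<Rightarrow> trm" where
  "lower c (Var i) = Var (if i < c then i else i - 1)"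
| "lower c (Lam t) = Lam (lower (Suc c) t)"
| "lower c (App t u) = App (lower c t) (lower c u)"
| "lower c (ES t u) = ES (lower (Suc c) t) (lower c u)"

fun free :: "nat \<Rightarrow> trm \<Rightarrow> bool" where
  "free x (Var i) = (i = x)"
| "free x (Lam t) = free (Suc x) t"
| "free x (App t u) = (free x t \<or> free x u)"
| "free x (ES t u) = (free (Suc x) t \<or> free x u)"

definition is_value :: "trm \<Rightarrow> bool" where
  "is_value t = (\<exists>b. t = Lam b)"

text \<open>Substitution contexts S: the list [u1,...,uk] (outermost first) represents
  the context <.>[xk:=uk]...[x1:=u1], i.e. plugS (u # us) t = (plugS us t)[x:=u].\<close>
fun plugS :: "trm list \<Rightarrow> trm \<Rightarrow> trm" where
  "plugS [] t = t"
| "plugS (u # us) t = ES (plugS us t) u"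

datatype wctx = WHole | WAppL wctx trm | WAppR trm wctx | WESArg trm wctx | WESBody wctx trm

text \<open>Plugging (capturing, i.e. literal replacement of the hole).\<close>
fun plugW :: "wctx \<Rightarrow> trm \<Rightarrow> trm" where
  "plugW WHole t = t"
| "plugW (WAppL W u) t = App (plugW W t) u"
| "plugW (WAppR u W) t = App u (plugW W t)"
| "plugW (WESArg u W) t = ES u (plugW W t)"
| "plugW (WESBody W u) t = ES (plugW W t) u"

fun depthW :: "wctx \<Rightarrow> nat" where
  "depthW WHole = 0"
| "depthW (WAppL W u) = depthW W"
| "depthW (WAppR u W) = depthW W"
| "depthW (WESArg u W) = depthW W"
| "depthW (WESBody W u) = Suc (depthW W)"

text \<open>Root rules. In W<<x>>[x:=u] the variable x at the hole refers to the outer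
  ES binder, i.e. has index depthW W; W<<u>> plugs u without capture, i.e. u is
  shifted over the depthW W + 1 binders.\<close>
inductive root :: "trm \<Rightarrow> trm \<Rightarrow> bool" where
  root_m: "root (App (plugS us (Lam t)) u) (plugS us (ES t (lift (length us) 0 u)))"
| root_e: "root (ES (plugW W (Var (depthW W))) u)
                (ES (plugW W (lift (Suc (depthW W)) 0 u)) u)"
| root_gcv: "is_value v \<Longrightarrow> \<not> free 0 t \<Longrightarrow>
    root (ES t (plugS us v)) (plugS us (lift (length us) 0 (lower 0 t)))"

inductive wstep :: "trm \<Rightarrow> trm \<Rightarrow> bool" where
  "root t u \<Longrightarrow> wstep (plugW W t) (plugW W u)"

datatype ctx = Hole | CLam ctx | CAppL ctx trm | CAppR trm ctx | CESBody ctx trm | CESArg trm ctx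

fun plugC :: "ctx \<Rightarrow> trm \<Rightarrow> trm" where
  "plugC Hole t = t"
| "plugC (CLam C) t = Lam (plugC C t)"
| "plugC (CAppL C u) t = App (plugC C t) u"
| "plugC (CAppR u C) t = App u (plugC C t)"
| "plugC (CESBody C u) t = ES (plugC C t) u"
| "plugC (CESArg u C) t = ES u (plugC C t)"

datatype lty = TN | Arr "lty multiset" lty

type_synonym tctx = "nat \<Rightarrow> lty multiset"

definition ctx_sum :: "tctx \<Rightarrow> tctx \<Rightarrow> tctx" where
  "ctx_sum G D = (\<lambda>x. G x + D x)"

definition ctx_empty :: tctx where
  "ctx_empty = (\<lambda>_. {#})"

definition ctx_single :: "nat \<Rightarrow> lty \<Rightarrow> tctx" where
  "ctx_single x L = (\<lambda>y. if y = x then {#L#} else {#})"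

text \<open>Removing the bound variable (index 0) and shifting: (G minus x) in de Bruijn form.\<close>
definition ctx_tail :: "tctx \<Rightarrow> tctx" where
  "ctx_tail G = (\<lambda>i. G (Suc i))"

text \<open>has_type G t L m e : G |-^(m,e) t : L ;  has_mtype G t M m e : G |-^(m,e) t : M.
  The rule (many) over a finite family is generated by empty/add.\<close>
inductive has_type :: "tctx \<Rightarrow> trm \<Rightarrow> lty \<Rightarrow> nat \<Rightarrow> nat \<Rightarrow> bool"
  and has_mtype :: "tctx \<Rightarrow> trm \<Rightarrow> lty multiset \<Rightarrow> nat \<Rightarrow> nat \<Rightarrow> bool" where
  t_ax: "has_type (ctx_single x L) (Var x) L 0 1"
| t_axlam: "has_type ctx_empty (Lam t) TN 0 0"
| t_lam: "has_type G t L m e \<Longrightarrow> has_type (ctx_tail G) (Lam t) (Arr (G 0) L) m e"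
| t_app: "has_type G t (Arr M L) m e \<Longrightarrow> has_mtype D u (M + {#TN#}) m' e' \<Longrightarrow>
          has_type (ctx_sum G D) (App t u) L (m + m' + 1) (e + e')"
| t_es: "has_type G t L m e \<Longrightarrow> has_mtype D u (G 0 + {#TN#}) m' e' \<Longrightarrow>
          has_type (ctx_sum (ctx_tail G) D) (ES t u) L (m + m') (e + e')"
| m_empty: "has_mtype ctx_empty t {#} 0 0"
| m_add: "has_type G t L m e \<Longrightarrow> has_mtype D t M m' e' \<Longrightarrow>
          has_mtype (ctx_sum G D) t (add_mset L M) (m + m') (e + e')"

definition typable :: "tctx \<Rightarrow> trm \<Rightarrow> lty \<Rightarrow> bool" where
  "typable G t L = (\<exists>m e. has_type G t L m e)"

definition fin_supp :: "tctx \<Rightarrow> bool" where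
  "fin_supp G = finite {x. G x \<noteq> {#}}"

definition typ_equiv :: "trm \<Rightarrow> trm \<Rightarrow> bool" where
  "typ_equiv t u = (\<forall>G L. fin_supp G \<longrightarrow> (typable G t L \<longleftrightarrow> typable G u L))"

end

theory Submission
  imports Defs "HOL-Library.Function_Algebras"
begin

(* The typings of C<t> depend on t only through the typings of t, which gives compatibility; by
   compatibility, invariance under weak reduction reduces to the three root rules.
   For the multiplicative rule and for garbage collection of values, explicit substitutions float
   out of the head of an application and out of the argument of a garbage substitution without
   changing typability; what remains is (\x.t) u == t[x\u], and t[x\v] == t for x not free in t,
   which holds because a value has type n only in the empty context.
   For the exponential rule, every typing of W<<x>> gives the hole some multi type A; the part x:A
   of the context can be replaced by any typing of u with A (substitution), and conversely every
   typing of W<<u>> arises in this way (anti-substitution). *)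

definition mtypable :: "tctx \<Rightarrow> trm \<Rightarrow> lty multiset \<Rightarrow> bool" where
  "mtypable G t M = (\<exists>m e. has_mtype G t M m e)"

definition ctx_msingle :: "nat \<Rightarrow> lty multiset \<Rightarrow> tctx" where
  "ctx_msingle x A = (\<lambda>y. if y = x then A else {#})"

(* Type contexts are handled as elements of the monoid nat => lty multiset; evaluating sums
   pointwise by default would eta-expand them and break reasoning modulo add_ac. *)
declare plus_fun_apply[simp del] zero_fun_apply[simp del]

lemma ctx_sum_eq_plus[simp]: "ctx_sum G D = G + D"
  by (simp add: ctx_sum_def plus_fun_def)

lemma ctx_empty_eq_zero[simp]: "ctx_empty = 0"
  by (simp add: ctx_empty_def zero_fun_def)

lemma ctx_single_eq_msingle[simp]: "ctx_single x L = ctx_msingle x {#L#}"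
  by (simp add: ctx_single_def ctx_msingle_def)

lemma ctx_msingle_apply_self[simp]: "ctx_msingle x A x = A"
  and ctx_msingle_Suc_apply_0[simp]: "ctx_msingle (Suc x) A 0 = {#}"
  and ctx_msingle_empty[simp]: "ctx_msingle x {#} = 0"
  and ctx_msingle_union: "ctx_msingle x (A + B) = ctx_msingle x A + ctx_msingle x B"
  and ctx_tail_plus[simp]: "ctx_tail (G + D) = ctx_tail G + ctx_tail D"
  and ctx_tail_msingle_0[simp]: "ctx_tail (ctx_msingle 0 A) = 0"
  and ctx_tail_msingle_Suc[simp]: "ctx_tail (ctx_msingle (Suc x) A) = ctx_msingle x A"
  by (auto simp: plus_fun_apply zero_fun_apply ctx_tail_def ctx_msingle_def fun_eq_iff)

section \<open>Inversion of typing\<close>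

lemma typable_Var: "typable (ctx_msingle x {#L#}) (Var x) L"
  using t_ax[of x L] by (auto simp: typable_def)

lemma typable_Lam_TN: "typable 0 (Lam t) TN"
  using t_axlam[of t] by (auto simp: typable_def)

lemma typable_Lam: "typable G t L \<Longrightarrow> typable (ctx_tail G) (Lam t) (Arr (G 0) L)"
  using t_lam by (fastforce simp: typable_def)

lemma typable_App:
  "typable G t (Arr M L) \<Longrightarrow> mtypable D u (M + {#TN#}) \<Longrightarrow> typable (G + D) (App t u) L"
  using t_app by (fastforce simp: typable_def mtypable_def)

lemma typable_ES:
  "typable G t L \<Longrightarrow> mtypable D u (G 0 + {#TN#}) \<Longrightarrow> typable (ctx_tail G + D) (ES t u) L"
  using t_es by (fastforce simp: typable_def mtypable_def)

lemma mtypable_add_mset: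
  "typable G t L \<Longrightarrow> mtypable D t M \<Longrightarrow> mtypable (G + D) t (add_mset L M)"
  using m_add by (fastforce simp: typable_def mtypable_def)

inductive_cases has_type_VarE: "has_type G (Var x) L m e"
inductive_cases has_type_LamE: "has_type G (Lam t) L m e"
inductive_cases has_type_AppE: "has_type G (App t u) L m e"
inductive_cases has_type_ESE: "has_type G (ES t u) L m e"
inductive_cases has_mtype_emptyE: "has_mtype G t {#} m e"
inductive_cases has_mtype_add_msetE: "has_mtype G t (add_mset L M) m e"

lemma typable_Var_iff: "typable G (Var x) L \<longleftrightarrow> G = ctx_msingle x {#L#}"
  by (auto simp: typable_def elim: has_type_VarE intro: t_ax[simplified])

lemma typable_Lam_iff: "typable G (Lam t) L \<longleftrightarrow>
    (L = TN \<and> G = 0) \<or> (\<exists>G' L'. L = Arr (G' 0) L' \<and> G = ctx_tail G' \<and> typable G' t L')"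
  by (auto simp: typable_def elim: has_type_LamE intro: t_lam t_axlam[simplified])

lemma typable_App_iff: "typable G (App t u) L \<longleftrightarrow>
    (\<exists>G1 G2 M. G = G1 + G2 \<and> typable G1 t (Arr M L) \<and> mtypable G2 u (M + {#TN#}))"
  by (fastforce simp: typable_def mtypable_def elim!: has_type_AppE intro: t_app[simplified])

lemma typable_ES_iff: "typable G (ES t u) L \<longleftrightarrow>
    (\<exists>G1 G2. G = ctx_tail G1 + G2 \<and> typable G1 t L \<and> mtypable G2 u (G1 0 + {#TN#}))"
  by (auto simp: typable_def mtypable_def elim!: has_type_ESE intro: t_es[simplified])

lemma mtypable_empty_iff[simp]: "mtypable G t {#} \<longleftrightarrow> G = 0"
  by (auto simp: mtypable_def elim: has_mtype_emptyE intro: m_empty[simplified])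

lemma mtypable_union_split:
  assumes "mtypable G t (A + B)"
  shows "\<exists>G1 G2. G = G1 + G2 \<and> mtypable G1 t A \<and> mtypable G2 t B"
proof -
  obtain m e where "has_mtype G t (A + B) m e"
    using assms by (auto simp: mtypable_def)
  then show ?thesis
  proof (induction G t "A + B" m e arbitrary: A B
      rule: has_type_has_mtype.inducts(2)[where ?P1.0 = "\<lambda>_ _ _ _ _. True"])
    case (m_add G t L m e D M m' e')
    then have hd: "typable G t L" and split: "add_mset L M = A + B"
      by (auto simp: typable_def)
    show ?case
    proof (cases "L \<in># A")
      case True
      then obtain A' where "A = add_mset L A'"
        by (metis insert_DiffM)
      with split have "M = A' + B"
        by simp
      then obtain H1 H2 where "D = H1 + H2" "mtypable H1 t A'" "mtypable H2 t B"
        using m_add.hyps(4) by blast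
      then show ?thesis
        using hd \<open>A = add_mset L A'\<close> mtypable_add_mset
        by (metis add.assoc ctx_sum_eq_plus)
    next
      case False
      with split obtain B' where "B = add_mset L B'"
        by (metis insert_DiffM union_iff union_single_eq_member)
      with split have "M = A + B'"
        by simp
      then obtain H1 H2 where "D = H1 + H2" "mtypable H1 t A" "mtypable H2 t B'"
        using m_add.hyps(4) by blast
      then show ?thesis
        using hd \<open>B = add_mset L B'\<close> mtypable_add_mset
        by (metis add.left_commute ctx_sum_eq_plus)
    qed
  qed auto
qed

lemma mtypable_single_iff[simp]: "mtypable G t {#L#} \<longleftrightarrow> typable G t L"
proof
  show "mtypable G t {#L#} \<Longrightarrow> typable G t L"
    by (fastforce simp: typable_def mtypable_def elim!: has_mtype_add_msetE has_mtype_emptyE)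
  show "typable G t L \<Longrightarrow> mtypable G t {#L#}"
    using mtypable_add_mset[of G t L 0 "{#}"] by simp
qed

lemma mtypable_add_mset_iff:
  "mtypable G t (add_mset L M) \<longleftrightarrow> (\<exists>G1 G2. G = G1 + G2 \<and> typable G1 t L \<and> mtypable G2 t M)"
  using mtypable_union_split[of G t "{#L#}" M] mtypable_add_mset by auto

lemma mtypable_union: "mtypable G t A \<Longrightarrow> mtypable D t B \<Longrightarrow> mtypable (G + D) t (A + B)"
proof (induction A arbitrary: G)
  case (add L A)
  then show ?case
    by (fastforce simp: mtypable_add_mset_iff add.assoc)
qed simp

lemma mtypable_union_iff:
  "mtypable G t (A + B) \<longleftrightarrow> (\<exists>G1 G2. G = G1 + G2 \<and> mtypable G1 t A \<and> mtypable G2 t B)"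
  using mtypable_union_split mtypable_union by blast

section \<open>Compatibility\<close>

lemma fin_supp_zero: "fin_supp 0"
  and fin_supp_msingle: "fin_supp (ctx_msingle x A)"
  and fin_supp_plus: "fin_supp G \<Longrightarrow> fin_supp D \<Longrightarrow> fin_supp (G + D)"
  and fin_supp_tail: "fin_supp G \<Longrightarrow> fin_supp (ctx_tail G)"
proof -
  show "fin_supp 0" "fin_supp (ctx_msingle x A)"
    by (auto simp: fin_supp_def zero_fun_apply ctx_msingle_def intro: finite_subset[of _ "{x}"])
  show "fin_supp G \<Longrightarrow> fin_supp D \<Longrightarrow> fin_supp (G + D)"
    unfolding fin_supp_def
    by (rule finite_subset[of _ "{x. G x \<noteq> {#}} \<union> {x. D x \<noteq> {#}}"]) (auto simp: plus_fun_apply)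
  have "{x. ctx_tail G x \<noteq> {#}} = Suc -` {x. G x \<noteq> {#}}"
    by (auto simp: ctx_tail_def)
  then show "fin_supp G \<Longrightarrow> fin_supp (ctx_tail G)"
    unfolding fin_supp_def by (metis finite_vimageI inj_Suc)
qed

lemma has_type_fin_supp: "has_type G t L m e \<Longrightarrow> fin_supp G"
  and has_mtype_fin_supp: "has_mtype G t M m e \<Longrightarrow> fin_supp G"
  by (induction rule: has_type_has_mtype.inducts)
    (auto simp: fin_supp_zero fin_supp_msingle fin_supp_plus fin_supp_tail)

lemma typ_equiv_iff: "typ_equiv t u \<longleftrightarrow> (\<forall>G L. typable G t L \<longleftrightarrow> typable G u L)"
  unfolding typ_equiv_def typable_def using has_type_fin_supp by blast

lemma mtypable_image_iff:
  assumes "\<And>G' L. typable G' t' L \<longleftrightarrow> (\<exists>G. G' = f G \<and> typable G t L)"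
    and "\<And>G D. f (G + D) = f G + f D" and "f 0 = 0"
  shows "mtypable G' t' M \<longleftrightarrow> (\<exists>G. G' = f G \<and> mtypable G t M)"
proof (induction M arbitrary: G')
  case empty
  show ?case
    using assms(3) by auto
next
  case (add L M)
  show ?case
    unfolding mtypable_add_mset_iff add.IH assms(1) by (metis assms(2))
qed

lemma mtypable_cong:
  assumes "\<And>G L. typable G t L \<longleftrightarrow> typable G u L"
  shows "mtypable G t M \<longleftrightarrow> mtypable G u M"
  using mtypable_image_iff[of u id t] assms by simp

lemma typable_plugC_cong:
  assumes "\<And>G L. typable G t L \<longleftrightarrow> typable G u L"
  shows "typable G (plugC C t) L \<longleftrightarrow> typable G (plugC C u) L"
proof (induction C arbitrary: G L)
  case Hole
  then show ?case
    by (simp add: assms)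
next
  case (CLam C)
  then show ?case
    by (simp add: typable_Lam_iff)
next
  case (CAppL C t')
  then show ?case
    by (simp add: typable_App_iff)
next
  case (CESBody C t')
  then show ?case
    by (simp add: typable_ES_iff)
next
  case (CAppR t' C)
  then show ?case
    by (simp add: typable_App_iff mtypable_cong[OF CAppR.IH])
next
  case (CESArg t' C)
  then show ?case
    by (simp add: typable_ES_iff mtypable_cong[OF CESArg.IH])
qed

lemma typ_equiv_plugC: "typ_equiv t u \<Longrightarrow> typ_equiv (plugC C t) (plugC C u)"
  unfolding typ_equiv_iff using typable_plugC_cong by blast

section \<open>Lifting\<close>

definition ctx_shift :: "nat \<Rightarrow> nat \<Rightarrow> tctx \<Rightarrow> tctx" where
  "ctx_shift k c G = (\<lambda>i. if i < c then G i else if i < c + k then {#} else G (i - k))"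

lemma ctx_shift_plus[simp]: "ctx_shift k c (G + D) = ctx_shift k c G + ctx_shift k c D"
  and ctx_shift_zero[simp]: "ctx_shift k c 0 = 0"
  and ctx_shift_0[simp]: "ctx_shift 0 c G = G"
  and ctx_shift_msingle: "ctx_shift k c (ctx_msingle x A) = ctx_msingle (if x < c then x else x + k) A"
  and ctx_shift_Suc_apply_0[simp]: "ctx_shift k (Suc c) G 0 = G 0"
  and ctx_shift_Suc_0_apply_0[simp]: "ctx_shift (Suc k) 0 G 0 = {#}"
  and ctx_tail_shift_Suc[simp]: "ctx_tail (ctx_shift k (Suc c) G) = ctx_shift k c (ctx_tail G)"
  and ctx_tail_shift_Suc_0[simp]: "ctx_tail (ctx_shift (Suc k) 0 G) = ctx_shift k 0 G"
  by (auto simp: ctx_shift_def plus_fun_apply zero_fun_apply ctx_tail_def ctx_msingle_def Suc_diff_le fun_eq_iff)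

lemma typable_lift_iff:
  "typable G' (lift k c t) L \<longleftrightarrow> (\<exists>G. G' = ctx_shift k c G \<and> typable G t L)"
proof (induction t arbitrary: c G' L)
  case (Var x)
  then show ?case
    by (auto simp: typable_Var_iff ctx_shift_msingle)
next
  case (Lam t)
  have "(\<exists>G1 L'. L = Arr (G1 0) L' \<and> G' = ctx_tail G1 \<and> typable G1 (lift k (Suc c) t) L') \<longleftrightarrow>
      (\<exists>G L'. L = Arr (G 0) L' \<and> G' = ctx_shift k c (ctx_tail G) \<and> typable G t L')"
    unfolding Lam.IH by (metis ctx_shift_Suc_apply_0 ctx_tail_shift_Suc)
  then show ?case
    by (auto simp: typable_Lam_iff)
next
  case (App t1 t2)
  have "mtypable G' (lift k c t2) M \<longleftrightarrow> (\<exists>G. G' = ctx_shift k c G \<and> mtypable G t2 M)" for G' M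
    by (rule mtypable_image_iff) (simp_all add: App.IH)
  then show ?case
    by (auto simp: typable_App_iff App.IH) (metis ctx_shift_plus)+
next
  case (ES t1 t2)
  have "mtypable G' (lift k c t2) M \<longleftrightarrow> (\<exists>G. G' = ctx_shift k c G \<and> mtypable G t2 M)" for G' M
    by (rule mtypable_image_iff) (simp_all add: ES.IH)
  then show ?case
    by (auto simp: typable_ES_iff ES.IH) (metis ctx_shift_plus ctx_tail_shift_Suc ctx_shift_Suc_apply_0)+
qed

lemma mtypable_lift_iff:
  "mtypable G' (lift k c t) M \<longleftrightarrow> (\<exists>G. G' = ctx_shift k c G \<and> mtypable G t M)"
  by (rule mtypable_image_iff) (simp_all add: typable_lift_iff)

lemma lift_0[simp]: "lift 0 c t = t"
  by (induction t arbitrary: c) auto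

lemma lift_lift: "lift a c (lift b c t) = lift (a + b) c t"
  by (induction t arbitrary: c) auto

lemma lift_lower: "\<not> free c t \<Longrightarrow> lift 1 c (lower c t) = t"
  by (induction t arbitrary: c) auto

section \<open>Floating explicit substitutions\<close>

lemma typ_equiv_trans[trans]: "typ_equiv t s \<Longrightarrow> typ_equiv s u \<Longrightarrow> typ_equiv t u"
  by (simp add: typ_equiv_iff)

lemma typ_equiv_ESBody: "typ_equiv t u \<Longrightarrow> typ_equiv (ES t s) (ES u s)"
  using typ_equiv_plugC[of t u "CESBody Hole s"] by simp

lemma typ_equiv_plugS: "typ_equiv t u \<Longrightarrow> typ_equiv (plugS us t) (plugS us u)"
  by (induction us) (simp_all add: typ_equiv_ESBody)

lemma typ_equiv_beta: "typ_equiv (App (Lam t) u) (ES t u)"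
  by (fastforce simp: typ_equiv_iff typable_App_iff typable_ES_iff typable_Lam_iff)

lemma typ_equiv_App_ES: "typ_equiv (App (ES t s) u) (ES (App t (lift 1 0 u)) s)"
  unfolding typ_equiv_iff
proof (intro allI iffI)
  fix G L
  assume "typable G (App (ES t s) u) L"
  then obtain H D E M where "G = ctx_tail H + D + E" "typable H t (Arr M L)"
    "mtypable D s (H 0 + {#TN#})" "mtypable E u (M + {#TN#})"
    by (auto simp: typable_App_iff typable_ES_iff)
  moreover have "mtypable (ctx_shift 1 0 E) (lift 1 0 u) (M + {#TN#})"
    using \<open>mtypable E u (M + {#TN#})\<close> mtypable_lift_iff by blast
  ultimately have "typable (ctx_tail (H + ctx_shift 1 0 E) + D) (ES (App t (lift 1 0 u)) s) L"
    by (intro typable_ES typable_App) (simp_all add: plus_fun_apply)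
  then show "typable G (ES (App t (lift 1 0 u)) s) L"
    by (simp add: \<open>G = ctx_tail H + D + E\<close> add_ac)
next
  fix G L
  assume "typable G (ES (App t (lift 1 0 u)) s) L"
  then obtain H E' D M where "G = ctx_tail (H + E') + D" "typable H t (Arr M L)"
    "mtypable E' (lift 1 0 u) (M + {#TN#})" "mtypable D s ((H + E') 0 + {#TN#})"
    by (auto simp: typable_App_iff typable_ES_iff)
  moreover obtain E where "E' = ctx_shift 1 0 E" "mtypable E u (M + {#TN#})"
    using \<open>mtypable E' (lift 1 0 u) (M + {#TN#})\<close> mtypable_lift_iff by blast
  ultimately have "typable (ctx_tail H + D + E) (App (ES t s) u) L"
    by (intro typable_ES typable_App) (simp_all add: plus_fun_apply)
  then show "typable G (App (ES t s) u) L"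
    by (simp add: \<open>G = ctx_tail (H + E') + D\<close> \<open>E' = ctx_shift 1 0 E\<close> add_ac)
qed

lemma typ_equiv_App_plugS: "typ_equiv (App (plugS us t) u) (plugS us (App t (lift (length us) 0 u)))"
proof (induction us arbitrary: u)
  case (Cons s us)
  have "typ_equiv (App (plugS (s # us) t) u) (ES (App (plugS us t) (lift 1 0 u)) s)"
    using typ_equiv_App_ES[of "plugS us t" s u] by simp
  also have "typ_equiv \<dots> (plugS (s # us) (App t (lift (length (s # us)) 0 u)))"
    using typ_equiv_ESBody[OF Cons.IH[of "lift 1 0 u"]] by (simp add: lift_lift)
  finally show ?case .
qed (simp add: typ_equiv_iff)

lemma typ_equiv_root_m:
  "typ_equiv (App (plugS us (Lam t)) u) (plugS us (ES t (lift (length us) 0 u)))"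
  using typ_equiv_App_plugS typ_equiv_plugS[OF typ_equiv_beta] by (rule typ_equiv_trans)

lemma typable_ES_garbage_iff:
  "typable G (ES (lift 1 0 t) u) L \<longleftrightarrow> (\<exists>G1 D. G = G1 + D \<and> typable G1 t L \<and> typable D u TN)"
proof
  show "typable G (ES (lift 1 0 t) u) L \<Longrightarrow> \<exists>G1 D. G = G1 + D \<and> typable G1 t L \<and> typable D u TN"
    by (auto simp: typable_ES_iff typable_lift_iff) blast
next
  assume "\<exists>G1 D. G = G1 + D \<and> typable G1 t L \<and> typable D u TN"
  then obtain G1 D where "G = G1 + D" "typable G1 t L" "typable D u TN"
    by blast
  then have "typable (ctx_tail (ctx_shift 1 0 G1) + D) (ES (lift 1 0 t) u) L"
    by (intro typable_ES) (auto simp: typable_lift_iff)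
  then show "typable G (ES (lift 1 0 t) u) L"
    by (simp add: \<open>G = G1 + D\<close>)
qed

lemma typable_value_TN_iff: "is_value v \<Longrightarrow> typable G v TN \<longleftrightarrow> G = 0"
  by (auto simp: is_value_def typable_Lam_iff)

lemma typ_equiv_garbage_value: "is_value v \<Longrightarrow> typ_equiv (ES (lift 1 0 t) v) t"
  unfolding typ_equiv_iff typable_ES_garbage_iff by (simp add: typable_value_TN_iff)

lemma typ_equiv_garbage_ES:
  "typ_equiv (ES (lift 1 0 t) (ES s u)) (ES (ES (lift 1 0 (lift 1 0 t)) s) u)"
  unfolding typ_equiv_iff
proof (intro allI iffI)
  fix G L
  assume "typable G (ES (lift 1 0 t) (ES s u)) L"
  then obtain G1 D1 D2 where G: "G = G1 + ctx_tail D1 + D2" and "typable G1 t L"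
    and D1: "typable D1 s TN" and D2: "mtypable D2 u (D1 0 + {#TN#})"
    unfolding typable_ES_garbage_iff by (auto simp: typable_ES_iff add.assoc)
  then have "typable (ctx_shift 1 0 G1) (lift 1 0 t) L"
    using typable_lift_iff by blast
  with D1 have "typable (ctx_shift 1 0 G1 + D1) (ES (lift 1 0 (lift 1 0 t)) s) L"
    unfolding typable_ES_garbage_iff by blast
  then have "typable (ctx_tail (ctx_shift 1 0 G1 + D1) + D2) (ES (ES (lift 1 0 (lift 1 0 t)) s) u) L"
    by (rule typable_ES) (use D2 in \<open>simp add: plus_fun_apply\<close>)
  then show "typable G (ES (ES (lift 1 0 (lift 1 0 t)) s) u) L"
    by (simp add: G)
next
  fix G L
  assume "typable G (ES (ES (lift 1 0 (lift 1 0 t)) s) u) L"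
  then obtain H D2 where G: "G = ctx_tail H + D2" and H: "typable H (ES (lift 1 0 (lift 1 0 t)) s) L"
    and D2: "mtypable D2 u (H 0 + {#TN#})"
    by (auto simp: typable_ES_iff)
  from H obtain G1 D1 where "H = ctx_shift 1 0 G1 + D1" "typable G1 t L" "typable D1 s TN"
    unfolding typable_ES_garbage_iff typable_lift_iff by blast
  moreover from this D2 have "typable (ctx_tail D1 + D2) (ES s u) TN"
    by (intro typable_ES) (simp_all add: plus_fun_apply)
  ultimately show "typable G (ES (lift 1 0 t) (ES s u)) L"
    unfolding typable_ES_garbage_iff by (auto simp: G add.assoc)
qed

lemma typ_equiv_garbage_plugS:
  assumes "is_value v"
  shows "typ_equiv (ES (lift 1 0 t) (plugS us v)) (plugS us (lift (length us) 0 t))"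
proof (induction us arbitrary: t)
  case (Cons s us)
  have "typ_equiv (ES (lift 1 0 t) (plugS (s # us) v)) (ES (ES (lift 1 0 (lift 1 0 t)) (plugS us v)) s)"
    using typ_equiv_garbage_ES[of t "plugS us v" s] by simp
  also have "typ_equiv \<dots> (plugS (s # us) (lift (length (s # us)) 0 t))"
    using typ_equiv_ESBody[OF Cons.IH[of "lift 1 0 t"]] by (simp add: lift_lift)
  finally show ?case .
qed (use typ_equiv_garbage_value[OF assms] in simp)

lemma typ_equiv_root_gcv:
  "is_value v \<Longrightarrow> \<not> free 0 t \<Longrightarrow>
    typ_equiv (ES t (plugS us v)) (plugS us (lift (length us) 0 (lower 0 t)))"
  using typ_equiv_garbage_plugS[of v "lower 0 t" us] lift_lower[of 0 t] by simp

section \<open>Linear substitution\<close>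

fun depthC :: "ctx \<Rightarrow> nat" where
  "depthC Hole = 0"
| "depthC (CLam C) = Suc (depthC C)"
| "depthC (CAppL C u) = depthC C"
| "depthC (CAppR u C) = depthC C"
| "depthC (CESBody C u) = Suc (depthC C)"
| "depthC (CESArg u C) = depthC C"

(* f u is s with u plugged in for one distinguished occurrence of x, lifted over the binders
   above it. Other occurrences of x in s are allowed, so only the part A of the context at x
   that types the distinguished occurrence is split off. abstractable is the converse. *)
definition substitutable :: "nat \<Rightarrow> trm \<Rightarrow> (trm \<Rightarrow> trm) \<Rightarrow> bool" where
  "substitutable x s f \<longleftrightarrow> (\<forall>G L. typable G s L \<longrightarrow> (\<exists>A G'. G = G' + ctx_msingle x A \<and>
     (\<forall>u D. mtypable D u A \<longrightarrow> typable (G' + D) (f u) L)))"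

lemma substitutable_mtypable:
  assumes "substitutable x s f"
  shows "mtypable G s M \<Longrightarrow> \<exists>A G'. G = G' + ctx_msingle x A \<and>
    (\<forall>u D. mtypable D u A \<longrightarrow> mtypable (G' + D) (f u) M)"
proof (induction M arbitrary: G)
  case empty
  then show ?case
    by (intro exI[of _ "{#}"] exI[of _ 0]) simp
next
  case (add L M)
  then obtain G1 G2 where G: "G = G1 + G2" and "typable G1 s L" and "mtypable G2 s M"
    by (auto simp: mtypable_add_mset_iff)
  then obtain A1 G1' A2 G2' where "G1 = G1' + ctx_msingle x A1" "G2 = G2' + ctx_msingle x A2"
    and f1: "\<forall>u D. mtypable D u A1 \<longrightarrow> typable (G1' + D) (f u) L"
    and f2: "\<forall>u D. mtypable D u A2 \<longrightarrow> mtypable (G2' + D) (f u) M"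
    using assms add.IH unfolding substitutable_def by meson
  then have "G = (G1' + G2') + ctx_msingle x (A1 + A2)"
    by (simp add: G ctx_msingle_union add_ac)
  moreover have "mtypable (G1' + G2' + D) (f u) (add_mset L M)" if D: "mtypable D u (A1 + A2)" for u D
  proof -
    obtain D1 D2 where "D = D1 + D2" "mtypable D1 u A1" "mtypable D2 u A2"
      using D by (auto simp: mtypable_union_iff)
    then show ?thesis
      using f1 f2 mtypable_add_mset[of "G1' + D1" "f u" L "G2' + D2" M] by (simp add: add_ac)
  qed
  ultimately show ?case
    by blast
qed

lemma substitutable_Var: "substitutable x (Var x) (\<lambda>u. u)"
  unfolding substitutable_def typable_Var_iff
proof (intro allI impI)
  fix G L
  assume "G = ctx_msingle x {#L#}"
  then show "\<exists>A G'. G = G' + ctx_msingle x A \<and> (\<forall>u D. mtypable D u A \<longrightarrow> typable (G' + D) u L)"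
    by (intro exI[of _ "{#L#}"] exI[of _ 0]) simp
qed

lemma substitutable_Lam:
  assumes "substitutable (Suc x) s f"
  shows "substitutable x (Lam s) (\<lambda>u. Lam (f (lift 1 0 u)))"
  unfolding substitutable_def
proof (intro allI impI)
  fix G L
  assume "typable G (Lam s) L"
  then consider "L = TN" "G = 0"
    | H L' where "L = Arr (H 0) L'" "G = ctx_tail H" "typable H s L'"
    by (auto simp: typable_Lam_iff)
  then show "\<exists>A G'. G = G' + ctx_msingle x A \<and>
      (\<forall>u D. mtypable D u A \<longrightarrow> typable (G' + D) (Lam (f (lift 1 0 u))) L)"
  proof cases
    case 1
    then show ?thesis
      by (intro exI[of _ "{#}"] exI[of _ 0]) (simp add: typable_Lam_TN)
  next
    case 2
    then obtain A H' where H: "H = H' + ctx_msingle (Suc x) A"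
      and f: "\<forall>u D. mtypable D u A \<longrightarrow> typable (H' + D) (f u) L'"
      using assms unfolding substitutable_def by blast
    have "typable (ctx_tail H' + D) (Lam (f (lift 1 0 u))) L" if "mtypable D u A" for u D
    proof -
      have "typable (H' + ctx_shift 1 0 D) (f (lift 1 0 u)) L'"
        using f that mtypable_lift_iff by blast
      from typable_Lam[OF this] show ?thesis
        using 2 H by (simp add: plus_fun_apply)
    qed
    with 2 H show ?thesis
      by auto
  qed
qed

lemma substitutable_AppL:
  assumes "substitutable x s f"
  shows "substitutable x (App s t) (\<lambda>u. App (f u) t)"
  unfolding substitutable_def
proof (intro allI impI)
  fix G L
  assume "typable G (App s t) L"
  then obtain G1 G2 M where G: "G = G1 + G2" and "typable G1 s (Arr M L)"
    and t: "mtypable G2 t (M + {#TN#})"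
    by (auto simp: typable_App_iff)
  then obtain A G1' where G1: "G1 = G1' + ctx_msingle x A"
    and f: "\<forall>u D. mtypable D u A \<longrightarrow> typable (G1' + D) (f u) (Arr M L)"
    using assms unfolding substitutable_def by blast
  have "typable (G1' + G2 + D) (App (f u) t) L" if "mtypable D u A" for u D
    using typable_App[OF f[rule_format, OF that] t] by (simp add: add_ac)
  then show "\<exists>A G'. G = G' + ctx_msingle x A \<and>
      (\<forall>u D. mtypable D u A \<longrightarrow> typable (G' + D) (App (f u) t) L)"
    by (intro exI[of _ A] exI[of _ "G1' + G2"]) (simp add: G G1 add_ac)
qed

lemma substitutable_AppR:
  assumes "substitutable x s f"
  shows "substitutable x (App t s) (\<lambda>u. App t (f u))"
  unfolding substitutable_def
proof (intro allI impI)
  fix G L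
  assume "typable G (App t s) L"
  then obtain G1 G2 M where G: "G = G1 + G2" and t: "typable G1 t (Arr M L)"
    and "mtypable G2 s (M + {#TN#})"
    by (auto simp: typable_App_iff)
  then obtain A G2' where G2: "G2 = G2' + ctx_msingle x A"
    and f: "\<forall>u D. mtypable D u A \<longrightarrow> mtypable (G2' + D) (f u) (M + {#TN#})"
    using substitutable_mtypable[OF assms] by blast
  have "typable (G1 + G2' + D) (App t (f u)) L" if "mtypable D u A" for u D
    using typable_App[OF t f[rule_format, OF that]] by (simp add: add_ac)
  then show "\<exists>A G'. G = G' + ctx_msingle x A \<and>
      (\<forall>u D. mtypable D u A \<longrightarrow> typable (G' + D) (App t (f u)) L)"
    by (intro exI[of _ A] exI[of _ "G1 + G2'"]) (simp add: G G2 add_ac)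
qed

lemma substitutable_ESArg:
  assumes "substitutable x s f"
  shows "substitutable x (ES t s) (\<lambda>u. ES t (f u))"
  unfolding substitutable_def
proof (intro allI impI)
  fix G L
  assume "typable G (ES t s) L"
  then obtain G1 G2 where G: "G = ctx_tail G1 + G2" and t: "typable G1 t L"
    and "mtypable G2 s (G1 0 + {#TN#})"
    by (auto simp: typable_ES_iff)
  then obtain A G2' where G2: "G2 = G2' + ctx_msingle x A"
    and f: "\<forall>u D. mtypable D u A \<longrightarrow> mtypable (G2' + D) (f u) (G1 0 + {#TN#})"
    using substitutable_mtypable[OF assms] by blast
  have "typable (ctx_tail G1 + G2' + D) (ES t (f u)) L" if "mtypable D u A" for u D
    using typable_ES[OF t f[rule_format, OF that]] by (simp add: add_ac)
  then show "\<exists>A G'. G = G' + ctx_msingle x A \<and>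
      (\<forall>u D. mtypable D u A \<longrightarrow> typable (G' + D) (ES t (f u)) L)"
    by (intro exI[of _ A] exI[of _ "ctx_tail G1 + G2'"]) (simp add: G G2 add_ac)
qed

lemma substitutable_ESBody:
  assumes "substitutable (Suc x) s f"
  shows "substitutable x (ES s t) (\<lambda>u. ES (f (lift 1 0 u)) t)"
  unfolding substitutable_def
proof (intro allI impI)
  fix G L
  assume "typable G (ES s t) L"
  then obtain G1 G2 where G: "G = ctx_tail G1 + G2" and "typable G1 s L"
    and t: "mtypable G2 t (G1 0 + {#TN#})"
    by (auto simp: typable_ES_iff)
  then obtain A G1' where G1: "G1 = G1' + ctx_msingle (Suc x) A"
    and f: "\<forall>u D. mtypable D u A \<longrightarrow> typable (G1' + D) (f u) L"
    using assms unfolding substitutable_def by blast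
  have "typable (ctx_tail G1' + G2 + D) (ES (f (lift 1 0 u)) t) L" if "mtypable D u A" for u D
  proof -
    have "typable (G1' + ctx_shift 1 0 D) (f (lift 1 0 u)) L"
      using f that mtypable_lift_iff by blast
    moreover have "mtypable G2 t ((G1' + ctx_shift 1 0 D) 0 + {#TN#})"
      using t G1 by (simp add: plus_fun_apply)
    ultimately have "typable (ctx_tail (G1' + ctx_shift 1 0 D) + G2) (ES (f (lift 1 0 u)) t) L"
      by (rule typable_ES)
    then show ?thesis
      by (simp add: add_ac)
  qed
  then show "\<exists>A G'. G = G' + ctx_msingle x A \<and>
      (\<forall>u D. mtypable D u A \<longrightarrow> typable (G' + D) (ES (f (lift 1 0 u)) t) L)"
    by (intro exI[of _ A] exI[of _ "ctx_tail G1' + G2"]) (simp add: G G1 add_ac)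
qed

lemma substitutable_plugC:
  "substitutable x (plugC C (Var (depthC C + x))) (\<lambda>u. plugC C (lift (depthC C) 0 u))"
proof (induction C arbitrary: x)
  case Hole
  then show ?case
    by (simp add: substitutable_Var)
next
  case (CLam C)
  then show ?case
    using substitutable_Lam[OF CLam.IH[of "Suc x"]] by (simp add: lift_lift)
next
  case (CAppL C t)
  then show ?case
    by (simp add: substitutable_AppL)
next
  case (CAppR t C)
  then show ?case
    by (simp add: substitutable_AppR)
next
  case (CESBody C t)
  then show ?case
    using substitutable_ESBody[OF CESBody.IH[of "Suc x"]] by (simp add: lift_lift)
next
  case (CESArg t C)
  then show ?case
    by (simp add: substitutable_ESArg)
qed

definition abstractable :: "nat \<Rightarrow> trm \<Rightarrow> (trm \<Rightarrow> trm) \<Rightarrow> bool" where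
  "abstractable x s f \<longleftrightarrow> (\<forall>u G L. typable G (f u) L \<longrightarrow>
     (\<exists>A G' D. G = G' + D \<and> mtypable D u A \<and> typable (G' + ctx_msingle x A) s L))"

lemma abstractable_mtypable:
  assumes "abstractable x s f"
  shows "mtypable G (f u) M \<Longrightarrow>
    \<exists>A G' D. G = G' + D \<and> mtypable D u A \<and> mtypable (G' + ctx_msingle x A) s M"
proof (induction M arbitrary: G)
  case empty
  then show ?case
    by (intro exI[of _ "{#}"] exI[of _ 0]) simp
next
  case (add L M)
  then obtain G1 G2 where G: "G = G1 + G2" and "typable G1 (f u) L" and "mtypable G2 (f u) M"
    by (auto simp: mtypable_add_mset_iff)
  then obtain A1 G1' D1 A2 G2' D2 where "G1 = G1' + D1" "G2 = G2' + D2"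
    and D: "mtypable D1 u A1" "mtypable D2 u A2"
    and s: "typable (G1' + ctx_msingle x A1) s L" "mtypable (G2' + ctx_msingle x A2) s M"
    using assms add.IH unfolding abstractable_def by meson
  then have "G = (G1' + G2') + (D1 + D2)"
    by (simp add: G add_ac)
  moreover have "mtypable (D1 + D2) u (A1 + A2)"
    using D by (rule mtypable_union)
  moreover have "mtypable ((G1' + G2') + ctx_msingle x (A1 + A2)) s (add_mset L M)"
    using mtypable_add_mset[OF s] by (simp add: ctx_msingle_union add_ac)
  ultimately show ?case
    by blast
qed

lemma abstractable_Var: "abstractable x (Var x) (\<lambda>u. u)"
  unfolding abstractable_def
proof (intro allI impI)
  fix u G L
  assume "typable G u L"
  then show "\<exists>A G' D. G = G' + D \<and> mtypable D u A \<and> typable (G' + ctx_msingle x A) (Var x) L"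
    by (intro exI[of _ "{#L#}"] exI[of _ 0] exI[of _ G]) (simp add: typable_Var)
qed

lemma abstractable_Lam:
  assumes "abstractable (Suc x) s f"
  shows "abstractable x (Lam s) (\<lambda>u. Lam (f (lift 1 0 u)))"
  unfolding abstractable_def
proof (intro allI impI)
  fix u G L
  assume "typable G (Lam (f (lift 1 0 u))) L"
  then consider "L = TN" "G = 0"
    | H L' where "L = Arr (H 0) L'" "G = ctx_tail H" "typable H (f (lift 1 0 u)) L'"
    by (auto simp: typable_Lam_iff)
  then show "\<exists>A G' D. G = G' + D \<and> mtypable D u A \<and> typable (G' + ctx_msingle x A) (Lam s) L"
  proof cases
    case 1
    then show ?thesis
      by (intro exI[of _ "{#}"] exI[of _ 0]) (simp add: typable_Lam_TN)
  next
    case 2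
    then obtain A H' D' where "H = H' + D'" and D': "mtypable D' (lift 1 0 u) A"
      and s: "typable (H' + ctx_msingle (Suc x) A) s L'"
      using assms unfolding abstractable_def by blast
    from D' obtain D where "D' = ctx_shift 1 0 D" and D: "mtypable D u A"
      unfolding mtypable_lift_iff by blast
    with \<open>H = H' + D'\<close> have H: "H = H' + ctx_shift 1 0 D"
      by simp
    have "typable (ctx_tail H' + ctx_msingle x A) (Lam s) L"
      using typable_Lam[OF s] 2 H by (simp add: plus_fun_apply)
    with 2 H D show ?thesis
      by (intro exI[of _ A] exI[of _ "ctx_tail H'"] exI[of _ D]) simp
  qed
qed

lemma abstractable_AppL:
  assumes "abstractable x s f"
  shows "abstractable x (App s t) (\<lambda>u. App (f u) t)"
  unfolding abstractable_def
proof (intro allI impI)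
  fix u G L
  assume "typable G (App (f u) t) L"
  then obtain G1 G2 M where G: "G = G1 + G2" and "typable G1 (f u) (Arr M L)"
    and t: "mtypable G2 t (M + {#TN#})"
    by (auto simp: typable_App_iff)
  then obtain A G1' D where G1: "G1 = G1' + D" and D: "mtypable D u A"
    and s: "typable (G1' + ctx_msingle x A) s (Arr M L)"
    using assms unfolding abstractable_def by blast
  have "typable (G1' + G2 + ctx_msingle x A) (App s t) L"
    using typable_App[OF s t] by (simp add: add_ac)
  with D show "\<exists>A G' D. G = G' + D \<and> mtypable D u A \<and> typable (G' + ctx_msingle x A) (App s t) L"
    by (intro exI[of _ A] exI[of _ "G1' + G2"] exI[of _ D]) (simp add: G G1 add_ac)
qed

lemma abstractable_AppR:
  assumes "abstractable x s f"
  shows "abstractable x (App t s) (\<lambda>u. App t (f u))"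
  unfolding abstractable_def
proof (intro allI impI)
  fix u G L
  assume "typable G (App t (f u)) L"
  then obtain G1 G2 M where G: "G = G1 + G2" and t: "typable G1 t (Arr M L)"
    and "mtypable G2 (f u) (M + {#TN#})"
    by (auto simp: typable_App_iff)
  then obtain A G2' D where G2: "G2 = G2' + D" and D: "mtypable D u A"
    and s: "mtypable (G2' + ctx_msingle x A) s (M + {#TN#})"
    using abstractable_mtypable[OF assms] by blast
  have "typable (G1 + G2' + ctx_msingle x A) (App t s) L"
    using typable_App[OF t s] by (simp add: add_ac)
  with D show "\<exists>A G' D. G = G' + D \<and> mtypable D u A \<and> typable (G' + ctx_msingle x A) (App t s) L"
    by (intro exI[of _ A] exI[of _ "G1 + G2'"] exI[of _ D]) (simp add: G G2 add_ac)
qed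

lemma abstractable_ESArg:
  assumes "abstractable x s f"
  shows "abstractable x (ES t s) (\<lambda>u. ES t (f u))"
  unfolding abstractable_def
proof (intro allI impI)
  fix u G L
  assume "typable G (ES t (f u)) L"
  then obtain G1 G2 where G: "G = ctx_tail G1 + G2" and t: "typable G1 t L"
    and "mtypable G2 (f u) (G1 0 + {#TN#})"
    by (auto simp: typable_ES_iff)
  then obtain A G2' D where G2: "G2 = G2' + D" and D: "mtypable D u A"
    and s: "mtypable (G2' + ctx_msingle x A) s (G1 0 + {#TN#})"
    using abstractable_mtypable[OF assms] by blast
  have "typable (ctx_tail G1 + G2' + ctx_msingle x A) (ES t s) L"
    using typable_ES[OF t s] by (simp add: add_ac)
  with D show "\<exists>A G' D. G = G' + D \<and> mtypable D u A \<and> typable (G' + ctx_msingle x A) (ES t s) L"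
    by (intro exI[of _ A] exI[of _ "ctx_tail G1 + G2'"] exI[of _ D]) (simp add: G G2 add_ac)
qed

lemma abstractable_ESBody:
  assumes "abstractable (Suc x) s f"
  shows "abstractable x (ES s t) (\<lambda>u. ES (f (lift 1 0 u)) t)"
  unfolding abstractable_def
proof (intro allI impI)
  fix u G L
  assume "typable G (ES (f (lift 1 0 u)) t) L"
  then obtain G1 G2 where G: "G = ctx_tail G1 + G2" and "typable G1 (f (lift 1 0 u)) L"
    and t: "mtypable G2 t (G1 0 + {#TN#})"
    by (auto simp: typable_ES_iff)
  then obtain A G1' D' where "G1 = G1' + D'" and D': "mtypable D' (lift 1 0 u) A"
    and s: "typable (G1' + ctx_msingle (Suc x) A) s L"
    using assms unfolding abstractable_def by blast
  from D' obtain D where "D' = ctx_shift 1 0 D" and D: "mtypable D u A"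
    unfolding mtypable_lift_iff by blast
  with \<open>G1 = G1' + D'\<close> have G1: "G1 = G1' + ctx_shift 1 0 D"
    by simp
  have "mtypable G2 t ((G1' + ctx_msingle (Suc x) A) 0 + {#TN#})"
    using t G1 by (simp add: plus_fun_apply)
  from typable_ES[OF s this]
  have "typable (ctx_tail G1' + G2 + ctx_msingle x A) (ES s t) L"
    by (simp add: add_ac)
  with G G1 D show "\<exists>A G' D. G = G' + D \<and> mtypable D u A \<and> typable (G' + ctx_msingle x A) (ES s t) L"
    by (intro exI[of _ A] exI[of _ "ctx_tail G1' + G2"] exI[of _ D]) (simp add: add_ac)
qed

lemma abstractable_plugC:
  "abstractable x (plugC C (Var (depthC C + x))) (\<lambda>u. plugC C (lift (depthC C) 0 u))"
proof (induction C arbitrary: x)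
  case Hole
  then show ?case
    by (simp add: abstractable_Var)
next
  case (CLam C)
  then show ?case
    using abstractable_Lam[OF CLam.IH[of "Suc x"]] by (simp add: lift_lift)
next
  case (CAppL C t)
  then show ?case
    by (simp add: abstractable_AppL)
next
  case (CAppR t C)
  then show ?case
    by (simp add: abstractable_AppR)
next
  case (CESBody C t)
  then show ?case
    using abstractable_ESBody[OF CESBody.IH[of "Suc x"]] by (simp add: lift_lift)
next
  case (CESArg t C)
  then show ?case
    by (simp add: abstractable_ESArg)
qed

lemma typ_equiv_root_e:
  "typ_equiv (ES (plugC C (Var (depthC C))) u) (ES (plugC C (lift (Suc (depthC C)) 0 u)) u)"
  (is "typ_equiv (ES ?s u) (ES ?t u)")
  unfolding typ_equiv_iff
proof (intro allI iffI)
  fix G L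
  assume "typable G (ES ?s u) L"
  then obtain G1 D where G: "G = ctx_tail G1 + D" and "typable G1 ?s L"
    and D: "mtypable D u (G1 0 + {#TN#})"
    by (auto simp: typable_ES_iff)
  then obtain A G' where G1: "G1 = G' + ctx_msingle 0 A"
    and subst: "\<forall>u D. mtypable D u A \<longrightarrow> typable (G' + D) (plugC C (lift (depthC C) 0 u)) L"
    using substitutable_plugC[of 0 C] unfolding substitutable_def add_0_right by blast
  have "G1 0 + {#TN#} = A + (G' 0 + {#TN#})"
    by (simp add: G1 plus_fun_apply)
  with D obtain Da Db where "D = Da + Db" and "mtypable Da u A" and Db: "mtypable Db u (G' 0 + {#TN#})"
    using mtypable_union_split by metis
  then have "typable (G' + ctx_shift 1 0 Da) (plugC C (lift (depthC C) 0 (lift 1 0 u))) L"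
    using subst mtypable_lift_iff by blast
  moreover have "mtypable Db u ((G' + ctx_shift 1 0 Da) 0 + {#TN#})"
    using Db by (simp add: plus_fun_apply)
  ultimately have "typable (ctx_tail (G' + ctx_shift 1 0 Da) + Db) (ES ?t u) L"
    using typable_ES by (fastforce simp: lift_lift)
  then show "typable G (ES ?t u) L"
    by (simp add: G G1 \<open>D = Da + Db\<close> add_ac)
next
  fix G L
  assume "typable G (ES ?t u) L"
  then obtain G1 D where G: "G = ctx_tail G1 + D"
    and "typable G1 (plugC C (lift (depthC C) 0 (lift 1 0 u))) L"
    and D: "mtypable D u (G1 0 + {#TN#})"
    by (auto simp: typable_ES_iff lift_lift)
  then obtain A G' D' where G1: "G1 = G' + D'" and D': "mtypable D' (lift 1 0 u) A"
    and s: "typable (G' + ctx_msingle 0 A) ?s L"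
    using abstractable_plugC[of 0 C] unfolding abstractable_def add_0_right by blast
  from D' obtain Da where "D' = ctx_shift 1 0 Da" and "mtypable Da u A"
    unfolding mtypable_lift_iff by blast
  with D have "mtypable (D + Da) u ((G' + ctx_msingle 0 A) 0 + {#TN#})"
    using mtypable_union by (fastforce simp: G1 plus_fun_apply add_ac)
  with s have "typable (ctx_tail (G' + ctx_msingle 0 A) + (D + Da)) (ES ?s u) L"
    by (rule typable_ES)
  then show "typable G (ES ?s u) L"
    by (simp add: G G1 \<open>D' = ctx_shift 1 0 Da\<close> add_ac)
qed

fun ctx_of_wctx :: "wctx \<Rightarrow> ctx" where
  "ctx_of_wctx WHole = Hole"
| "ctx_of_wctx (WAppL W u) = CAppL (ctx_of_wctx W) u"
| "ctx_of_wctx (WAppR u W) = CAppR u (ctx_of_wctx W)"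
| "ctx_of_wctx (WESArg u W) = CESArg u (ctx_of_wctx W)"
| "ctx_of_wctx (WESBody W u) = CESBody (ctx_of_wctx W) u"

lemma plugW_eq_plugC: "plugW W t = plugC (ctx_of_wctx W) t"
  by (induction W) auto

lemma depthW_eq_depthC: "depthW W = depthC (ctx_of_wctx W)"
  by (induction W) auto

lemma typ_equiv_root: "root t u \<Longrightarrow> typ_equiv t u"
proof (induction rule: root.induct)
  case (root_m us t u)
  show ?case
    by (rule typ_equiv_root_m)
next
  case (root_e W u)
  show ?case
    using typ_equiv_root_e[of "ctx_of_wctx W" u] by (simp add: plugW_eq_plugC depthW_eq_depthC)
next
  case (root_gcv v t us)
  then show ?case
    by (rule typ_equiv_root_gcv)
qed

theorem theorem6p8:
  shows "(\<forall>t u. wstep t u \<longrightarrow> typ_equiv t u)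
       \<and> (\<forall>t u C. typ_equiv t u \<longrightarrow> typ_equiv (plugC C t) (plugC C u))"
proof (intro conjI allI impI)
  fix t u
  assume "wstep t u"
  then show "typ_equiv t u"
  proof cases
    case (1 t' u' W)
    then show ?thesis
      using typ_equiv_plugC[OF typ_equiv_root] by (simp add: plugW_eq_plugC)
  qed
next
  fix t u C
  show "typ_equiv t u \<Longrightarrow> typ_equiv (plugC C t) (plugC C u)"
    by (rule typ_equiv_plugC)
qed

end
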